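(* Let $P$ be a simple polytope of dimension $n\leq 3$ and let $\lambda$ be a real characteristic matrix on $P$. Then there exists a characteristic matrix $\lambda'$ on $P$ whose reduction modulo $2$ equals $\lambda$.
   Context: Let $P$ be a simple $n$-polytope with facets $F_1,\ldots,F_m$. A characteristic matrix on $P$ is an integer $n\times m$ matrix $(\boldsymbol\lambda_1,\ldots,\boldsymbol\lambda_m)$ such that whenever $F_{i_1},\ldots,F_{i_n}$ meet at a vertex, $\det(\boldsymbol\lambda_{i_1},\ldots,\boldsymbol\lambda_{i_n})=\pm 1$. A real characteristic matrix on $P$ is an $n\times m$ matrix over $\mathbb{Z}/2$ satisfying the same condition with determinant $1\in\mathbb{Z}/2$. *)

theory Defs
  imports "HOL-Analysis.Analysis" "HOL-Library.Z2"
begin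

definition simple_polytope :: "(real^'n) set \<Rightarrow> bool" where
  "simple_polytope P \<longleftrightarrow> polytope P \<and> aff_dim P = int CARD('n) \<and>
     (\<forall>v. {v} face_of P \<longrightarrow> card {F. F facet_of P \<and> v \<in> F} = CARD('n))"

definition facet_enumeration :: "(real^'n) set \<Rightarrow> nat \<Rightarrow> (nat \<Rightarrow> (real^'n) set) \<Rightarrow> bool" where
  "facet_enumeration P m F \<longleftrightarrow> bij_betw F {..<m} {G. G facet_of P}"

definition char_condition ::
  "('a::comm_ring_1 \<Rightarrow> bool) \<Rightarrow> (real^'n) set \<Rightarrow> nat \<Rightarrow> (nat \<Rightarrow> (real^'n) set)
     \<Rightarrow> (nat \<Rightarrow> 'a^'n) \<Rightarrow> bool" where
  "char_condition ok P m F lam \<longleftrightarrow>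
     (\<forall>v (g::'n \<Rightarrow> nat). {v} face_of P \<longrightarrow> bij_betw g UNIV {i. i < m \<and> v \<in> F i} \<longrightarrow>
        ok (det (\<chi> r c. lam (g c) $ r)))"

definition characteristic_matrix ::
  "(real^'n) set \<Rightarrow> nat \<Rightarrow> (nat \<Rightarrow> (real^'n) set) \<Rightarrow> (nat \<Rightarrow> int^'n) \<Rightarrow> bool" where
  "characteristic_matrix P m F lam \<longleftrightarrow> char_condition (\<lambda>d. d = 1 \<or> d = -1) P m F lam"

definition real_characteristic_matrix ::
  "(real^'n) set \<Rightarrow> nat \<Rightarrow> (nat \<Rightarrow> (real^'n) set) \<Rightarrow> (nat \<Rightarrow> bit^'n) \<Rightarrow> bool" where
  "real_characteristic_matrix P m F lam \<longleftrightarrow> char_condition (\<lambda>d. d = 1) P m F lam"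

end

theory Submission
  imports Defs
begin

text \<open>Lift every entry of the mod 2 matrix to 0 or 1 in \<int>. Reduction mod 2 commutes with
  the determinant, so at each vertex the lifted n \<times> n minor has odd determinant. For n \<le> 3 a
  0/1 matrix has determinant of absolute value at most 2: in the Sarrus expansion the three
  positive and the three negative terms are each 0 or 1, and all three positive (or all three
  negative) terms equal 1 only if every entry is 1, in which case the determinant is 0. An odd
  integer of absolute value at most 2 is \<plusminus>1.\<close>

lemma det_expand_1:
  fixes A :: "'a::comm_ring_1^'n^'n"
  assumes "(UNIV::'n set) = {a}"
  shows "det A = A$a$a"
  unfolding det_def assms permutes_sing by (simp add: sign_id)

lemma det_expand_2:
  fixes A :: "'a::comm_ring_1^'n^'n"
  assumes UNIV: "(UNIV::'n set) = {a,b}" and "a \<noteq> b"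
  shows "det A = A$a$a*A$b$b - A$a$b*A$b$a"
proof -
  have "finite {b}" "a \<notin> {b}" using \<open>a \<noteq> b\<close> by auto
  note expand = sum_over_permutations_insert[OF this]
  show ?thesis
    unfolding det_def UNIV expand permutes_sing
    using \<open>a \<noteq> b\<close> by (simp add: sign_swap_id sign_id swap_id_eq)
qed

lemma det_expand_3:
  fixes A :: "'a::comm_ring_1^'n^'n"
  assumes UNIV: "(UNIV::'n set) = {a,b,c}" and distinct: "a \<noteq> b" "b \<noteq> c" "a \<noteq> c"
  shows "det A = A$a$a*A$b$b*A$c$c + A$a$b*A$b$c*A$c$a + A$a$c*A$b$a*A$c$b
     - A$a$a*A$b$c*A$c$b - A$a$b*A$b$a*A$c$c - A$a$c*A$b$b*A$c$a"
proof -
  have "finite {b, c}" "a \<notin> {b, c}" using distinct by auto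
  note expand_a = sum_over_permutations_insert[OF this]
  have "finite {c}" "b \<notin> {c}" using distinct by auto
  note expand_b = sum_over_permutations_insert[OF this]
  show ?thesis
    unfolding det_def UNIV expand_a expand_b permutes_sing
    using distinct
    by (simp add: sign_swap_id permutation_swap_id sign_compose sign_id swap_id_eq algebra_simps)
qed

lemma det_of_int_entries:
  fixes A :: "int^'n^'n"
  shows "det (\<chi> r c. (of_int (A$r$c) :: 'a::comm_ring_1)) = of_int (det A)"
  unfolding det_def by (simp add: of_int_sum of_int_mult of_int_prod)

lemma zero_one_prod3:
  fixes x y z :: int
  assumes "x \<in> {0,1}" "y \<in> {0,1}" "z \<in> {0,1}"
  shows "0 \<le> x*y*z \<and> x*y*z \<le> 1 \<and> (x*y*z = 1 \<longleftrightarrow> x = 1 \<and> y = 1 \<and> z = 1)"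
  using assms by auto

lemma abs_sarrus_zero_one_le_2:
  fixes a11 a12 a13 a21 a22 a23 a31 a32 a33 :: int
  assumes "a11 \<in> {0,1}" "a12 \<in> {0,1}" "a13 \<in> {0,1}" "a21 \<in> {0,1}" "a22 \<in> {0,1}"
    "a23 \<in> {0,1}" "a31 \<in> {0,1}" "a32 \<in> {0,1}" "a33 \<in> {0,1}"
  shows "\<bar>(a11*a22*a33 + a12*a23*a31 + a13*a21*a32) - (a11*a23*a32 + a12*a21*a33 + a13*a22*a31)\<bar>
    \<le> 2"
proof -
  define p where "p = a11*a22*a33 + a12*a23*a31 + a13*a21*a32"
  define q where "q = a11*a23*a32 + a12*a21*a33 + a13*a22*a31"
  have bounds: "0 \<le> p" "p \<le> 3" "0 \<le> q" "q \<le> 3"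
    unfolding p_def q_def using zero_one_prod3 assms by (smt (verit))+
  have "a11 = 1 \<and> a12 = 1 \<and> a13 = 1 \<and> a21 = 1 \<and> a22 = 1 \<and> a23 = 1 \<and> a31 = 1 \<and> a32 = 1 \<and> a33 = 1"
    if "p = 3 \<or> q = 3"
    using that unfolding p_def q_def using zero_one_prod3 assms by (smt (verit))
  then have "p = 3 \<longleftrightarrow> q = 3" unfolding p_def q_def by auto
  with bounds show ?thesis unfolding p_def[symmetric] q_def[symmetric] by linarith
qed

lemma abs_det_zero_one_le_2:
  fixes A :: "int^'n^'n"
  assumes "CARD('n) \<le> 3" and zero_one: "\<And>i j. A$i$j \<in> {0,1}"
  shows "\<bar>det A\<bar> \<le> 2"
proof -
  have "CARD('n) > 0" by simp
  with assms(1) consider "CARD('n) = 1" | "CARD('n) = 2" | "CARD('n) = 3" by linarith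
  then show ?thesis
  proof cases
    case 1
    then obtain a where "(UNIV::'n set) = {a}" by (metis card_1_singletonE)
    then show ?thesis using zero_one[of a a] by (auto simp: det_expand_1)
  next
    case 2
    then obtain a b where "(UNIV::'n set) = {a,b}" "a \<noteq> b" by (metis card_2_iff)
    then show ?thesis
      using zero_one[of a a] zero_one[of a b] zero_one[of b a] zero_one[of b b]
      by (auto simp: det_expand_2)
  next
    case 3
    then obtain a b c where "(UNIV::'n set) = {a,b,c}" "a \<noteq> b" "b \<noteq> c" "a \<noteq> c"
      by (metis card_3_iff)
    then show ?thesis
      using abs_sarrus_zero_one_le_2[OF zero_one[of a a] zero_one[of a b] zero_one[of a c]
          zero_one[of b a] zero_one[of b b] zero_one[of b c]
          zero_one[of c a] zero_one[of c b] zero_one[of c c]]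
      by (simp add: det_expand_3 algebra_simps)
  qed
qed

lemma odd_det_zero_one_eq_pm1:
  fixes A :: "int^'n^'n"
  assumes "CARD('n) \<le> 3" and "\<And>i j. A$i$j \<in> {0,1}" and "odd (det A)"
  shows "det A = 1 \<or> det A = -1"
  using abs_det_zero_one_le_2[OF assms(1,2)] assms(3) by presburger

lemma of_int_of_bit: "(of_int (of_bit b :: int) :: bit) = b"
  by (cases b) simp_all

lemma of_int_bit_eq_1_iff: "(of_int k :: bit) = 1 \<longleftrightarrow> odd k"
  using even_of_int_iff[of k, where 'a=bit] by (cases "of_int k :: bit") simp_all

theorem proposition2p17:
  fixes P :: "(real^'n) set" and m :: nat and F :: "nat \<Rightarrow> (real^'n) set"
    and lam :: "nat \<Rightarrow> bit^'n"
  assumes "simple_polytope P"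
    and "CARD('n) \<le> 3"
    and "facet_enumeration P m F"
    and "real_characteristic_matrix P m F lam"
  shows "\<exists>lam' :: nat \<Rightarrow> int^'n. characteristic_matrix P m F lam' \<and>
           (\<forall>i<m. \<forall>r. of_int (lam' i $ r) = lam i $ r)"
proof -
  define lam' :: "nat \<Rightarrow> int^'n" where "lam' i = (\<chi> r. of_bit (lam i $ r))" for i
  have reduces: "of_int (lam' i $ r) = lam i $ r" for i r
    by (simp add: lam'_def of_int_of_bit)
  have "characteristic_matrix P m F lam'"
    unfolding characteristic_matrix_def char_condition_def
  proof (intro allI impI)
    fix v and g :: "'n \<Rightarrow> nat"
    define A :: "int^'n^'n" where "A = (\<chi> r c. lam' (g c) $ r)"
    assume "{v} face_of P" "bij_betw g UNIV {i. i < m \<and> v \<in> F i}"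
    then have "det (\<chi> r c. lam (g c) $ r) = 1"
      using assms(4) unfolding real_characteristic_matrix_def char_condition_def by blast
    then have "(of_int (det A) :: bit) = 1"
      by (simp add: A_def reduces flip: det_of_int_entries)
    then have "odd (det A)" by (simp add: of_int_bit_eq_1_iff)
    moreover have "A$i$j \<in> {0,1}" for i j
      by (simp add: A_def lam'_def, metis bit_not_zero_iff)
    ultimately show "det (\<chi> r c. lam' (g c) $ r) = 1 \<or> det (\<chi> r c. lam' (g c) $ r) = -1"
      unfolding A_def[symmetric] using odd_det_zero_one_eq_pm1[OF assms(2)] by blast
  qed
  with reduces show ?thesis by blast
qed

end
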